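(* Let $S\subset\mathbb N$ be finite. The following are equivalent: (1) $S$ is not a caterpillar; (2) there is a subset $T\subset S$ whose split is $T=(L,R)$ with $|L|,|R|\geq 2$; (3) there is a subset $T\subset S$ whose split is $T=(L,R)$ with $|L|=|R|=2$. Consequently, every subset of a caterpillar is a caterpillar.
   Context: For $m\in\mathbb N$ let $d(m)$ be the finite set of integers with $m=\sum_{i\in d(m)}2^i$. For a finite $S\subset\mathbb N$ with $|S|\geq2$, its first splitting index is $s(S)=\max\{i:\exists x,y\in S,\ i\in d(x)\setminus d(y)\}$; with $S_0=\{x\in S:s(S)\notin d(x)\}$ and $S_1=\{x\in S:s(S)\in d(x)\}$ (both nonempty), $(S_0,S_1)$ is the split of $S$, written $S=(S_0,S_1)$. Caterpillars are defined recursively: the empty set and all singletons are caterpillars; a finite $S\subset\mathbb N$ with $|S|\geq2$ and split $(S_0,S_1)$ is a caterpillar iff one of $S_0,S_1$ is a singleton and the other is a caterpillar. *)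

theory Defs
  imports Main
begin

definition digits :: "nat \<Rightarrow> nat set" where
  "digits m = {i. bit m i}"

text \<open>First splitting index s(S) (meaningful for finite S with at least 2 elements).\<close>
definition split_index :: "nat set \<Rightarrow> nat" where
  "split_index S = Max {i. \<exists>x\<in>S. \<exists>y\<in>S. i \<in> digits x - digits y}"

definition split0 :: "nat set \<Rightarrow> nat set" where
  "split0 S = {x\<in>S. split_index S \<notin> digits x}"

definition split1 :: "nat set \<Rightarrow> nat set" where
  "split1 S = {x\<in>S. split_index S \<in> digits x}"

text \<open>Caterpillars, defined recursively (the recursion is on strictly smaller sets,
  so the inductive definition coincides with the recursive one).\<close>
inductive caterpillar :: "nat set \<Rightarrow> bool" where
  empty: "caterpillar {}"
| single: "caterpillar {x}"
| split: "\<lbrakk>finite S; card S \<ge> 2;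
           (card (split0 S) = 1 \<and> caterpillar (split1 S)) \<or>
           (card (split1 S) = 1 \<and> caterpillar (split0 S))\<rbrakk> \<Longrightarrow> caterpillar S"

end

theory Submission
  imports Defs
begin

text \<open>If a subset T of S meets both sides of the split of S, then the largest digit on which
  elements of T differ is still s(S), so the split of T is the restriction of the split of S.
  Hence every subset of a caterpillar either lies in its caterpillar side or has one side of its
  split inside the singleton side, and by induction no subset of a caterpillar has a split with
  both sides of size at least 2. Conversely, without such a wide split one side of every split
  is a singleton. Two elements from each side of a wide split form a subset whose split has
  sides of size exactly 2.\<close>

definition differing_digits :: "nat set \<Rightarrow> nat set" where
  "differing_digits S = {i. \<exists>x\<in>S. \<exists>y\<in>S. i \<in> digits x - digits y}"

definition wide_split :: "nat set \<Rightarrow> bool" where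
  "wide_split T \<longleftrightarrow> card (split0 T) \<ge> 2 \<and> card (split1 T) \<ge> 2"

lemma bit_imp_less:
  assumes "bit (x::nat) i"
  shows "i < x"
proof (rule ccontr)
  assume "\<not> i < x"
  then have "x < 2 ^ i" using less_exp[of i] by linarith
  with assms show False by (simp add: bit_nat_def)
qed

lemma split_index_eq_Max: "split_index S = Max (differing_digits S)"
  by (simp add: split_index_def differing_digits_def)

lemma differing_digits_mono: "T \<subseteq> S \<Longrightarrow> differing_digits T \<subseteq> differing_digits S"
  by (auto simp: differing_digits_def)

lemma finite_differing_digits:
  assumes "finite S"
  shows "finite (differing_digits S)"
proof (rule finite_subset)
  show "differing_digits S \<subseteq> {..< Max S}"
    using assms by (fastforce simp: differing_digits_def digits_def
        dest: bit_imp_less intro: less_le_trans)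
qed simp

lemma split_index_in_differing_digits:
  assumes "finite S" "card S \<ge> 2"
  shows "split_index S \<in> differing_digits S"
proof -
  obtain x y where xy: "x \<in> S" "y \<in> S" "x \<noteq> y"
    using assms by (metis card_le_Suc0_iff_eq not_less_eq_eq numeral_2_eq_2)
  then obtain i where "bit x i \<noteq> bit y i" using bit_eq_iff by blast
  with xy have "i \<in> differing_digits S" by (auto simp: differing_digits_def digits_def)
  then show ?thesis
    using finite_differing_digits[OF assms(1)] Max_in by (fastforce simp: split_index_eq_Max)
qed

lemma split_subsets: "split0 S \<subseteq> S" "split1 S \<subseteq> S"
  by (auto simp: split0_def split1_def)

lemma split_nonempty:
  assumes "finite S" "card S \<ge> 2"
  shows "split0 S \<noteq> {}" "split1 S \<noteq> {}"
  using split_index_in_differing_digits[OF assms]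
  by (auto simp: differing_digits_def split0_def split1_def)

lemma split_of_subset:
  assumes "finite S" "T \<subseteq> S" "x \<in> T" "x \<in> split0 S" "y \<in> T" "y \<in> split1 S"
  shows "split0 T = T \<inter> split0 S" "split1 T = T \<inter> split1 S"
proof -
  have "split_index S \<in> differing_digits T"
    using assms(3-6) by (auto simp: differing_digits_def split0_def split1_def)
  moreover have "finite (differing_digits T)"
    using assms(1,2) finite_differing_digits finite_subset by blast
  moreover have "i \<le> split_index S" if "i \<in> differing_digits T" for i
    using that differing_digits_mono[OF assms(2)] finite_differing_digits[OF assms(1)]
    by (auto simp: split_index_eq_Max)
  ultimately have "split_index T = split_index S"
    by (simp add: split_index_eq_Max Max_eqI)
  then show "split0 T = T \<inter> split0 S" "split1 T = T \<inter> split1 S"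
    using assms(2) by (auto simp: split0_def split1_def)
qed

lemma subset_split_cases:
  assumes "finite S" "T \<subseteq> S"
  shows "T \<subseteq> split1 S \<or> split0 T \<subseteq> split0 S"
    and "T \<subseteq> split0 S \<or> split1 T \<subseteq> split1 S"
proof -
  have "T \<subseteq> split0 S \<or> T \<subseteq> split1 S \<or> (split0 T \<subseteq> split0 S \<and> split1 T \<subseteq> split1 S)"
  proof (cases "\<exists>x\<in>T. \<exists>y\<in>T. x \<in> split0 S \<and> y \<in> split1 S")
    case True
    then obtain x y where "x \<in> T" "x \<in> split0 S" "y \<in> T" "y \<in> split1 S" by blast
    from split_of_subset[OF assms this] show ?thesis by blast
  next
    case False
    with assms(2) show ?thesis by (auto simp: split0_def split1_def)
  qed
  then show "T \<subseteq> split1 S \<or> split0 T \<subseteq> split0 S" "T \<subseteq> split0 S \<or> split1 T \<subseteq> split1 S"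
    using split_subsets[of T] by blast+
qed

lemma card_le_one_if_subset:
  assumes "card B = 1" "A \<subseteq> B"
  shows "card A \<le> 1"
  using assms card_mono[of B A] card_ge_0_finite by fastforce

lemma caterpillar_no_wide_subset:
  assumes "caterpillar S" "T \<subseteq> S"
  shows "\<not> wide_split T"
  using assms
proof (induction arbitrary: T)
  case empty
  then show ?case by (simp add: wide_split_def split0_def)
next
  case (single x)
  then have "card (split0 T) \<le> 1"
    using split_subsets(1)[of T] card_le_one_if_subset[of "{x}"] by auto
  then show ?case by (simp add: wide_split_def)
next
  case (split S)
  note cases = subset_split_cases[OF split(1) split(4)]
  from split(3) show ?case
  proof
    assume "card (split0 S) = 1 \<and> caterpillar (split1 S)
      \<and> (\<forall>T\<subseteq>split1 S. \<not> wide_split T)"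
    with cases(1) card_le_one_if_subset[of "split0 S" "split0 T"] show ?thesis
      by (auto simp: wide_split_def)
  next
    assume "card (split1 S) = 1 \<and> caterpillar (split0 S)
      \<and> (\<forall>T\<subseteq>split0 S. \<not> wide_split T)"
    with cases(2) card_le_one_if_subset[of "split1 S" "split1 T"] show ?thesis
      by (auto simp: wide_split_def)
  qed
qed

lemma caterpillar_if_no_wide_subset:
  assumes "finite S" "\<forall>T\<subseteq>S. \<not> wide_split T"
  shows "caterpillar S"
  using assms
proof (induction rule: finite_psubset_induct)
  case (psubset S)
  show ?case
  proof (cases "card S \<ge> 2")
    case False
    then have "S = {} \<or> (\<exists>x. S = {x})"
      using psubset(1)
      by (metis Suc_1 Suc_leI card_0_eq card_1_singletonE less_one linorder_neqE_nat)
    then show ?thesis using caterpillar.intros(1,2) by blast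
  next
    case True
    have ne: "split0 S \<noteq> {}" "split1 S \<noteq> {}"
      using split_nonempty[OF psubset(1) True] .
    have "card (split0 S) \<ge> 1" "card (split1 S) \<ge> 1"
      using ne psubset(1) split_subsets finite_subset
      by (metis One_nat_def Suc_leI card_gt_0_iff)+
    moreover have "\<not> wide_split S" using psubset(3) by blast
    ultimately have one: "card (split0 S) = 1 \<or> card (split1 S) = 1"
      by (auto simp: wide_split_def)
    have "split0 S \<subset> S" "split1 S \<subset> S"
      using ne split_subsets by (auto simp: split0_def split1_def)
    then have "caterpillar (split0 S)" "caterpillar (split1 S)"
      using psubset(2,3) by (meson order.trans psubset_imp_subset)+
    with one show ?thesis using caterpillar.split[OF psubset(1) True] by blast
  qed
qed

theorem caterpillar_iff_no_wide_subset:
  assumes "finite S"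
  shows "caterpillar S \<longleftrightarrow> (\<forall>T\<subseteq>S. \<not> wide_split T)"
  using assms caterpillar_no_wide_subset caterpillar_if_no_wide_subset by blast

lemma caterpillar_finite: "caterpillar S \<Longrightarrow> finite S"
  by (induction rule: caterpillar.induct) auto

corollary caterpillar_subset:
  assumes "caterpillar S" "T \<subseteq> S"
  shows "caterpillar T"
proof (rule caterpillar_if_no_wide_subset)
  show "finite T" using assms caterpillar_finite finite_subset by blast
  show "\<forall>U\<subseteq>T. \<not> wide_split U"
    using assms caterpillar_no_wide_subset by blast
qed

lemma wide_split_iff_card:
  assumes "finite T"
  shows "wide_split T \<longleftrightarrow> card T \<ge> 2 \<and> card (split0 T) \<ge> 2 \<and> card (split1 T) \<ge> 2"
  using card_mono[OF assms split_subsets(1)] by (auto simp: wide_split_def)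

lemma wide_split_obtain_card_4:
  assumes "finite T" "wide_split T"
  obtains U where "U \<subseteq> T" "card U = 4" "card (split0 U) = 2" "card (split1 U) = 2"
proof -
  obtain A B where A: "A \<subseteq> split0 T" "card A = 2" and B: "B \<subseteq> split1 T" "card B = 2"
    using assms(2) obtain_subset_with_card_n unfolding wide_split_def by metis
  obtain a b where "a \<in> A" "b \<in> B"
    using A(2) B(2) by (metis card_2_iff insertI1)
  then have "split0 (A \<union> B) = A" "split1 (A \<union> B) = B"
    using split_of_subset[OF assms(1), of "A \<union> B" a b] A(1) B(1) split_subsets[of T]
    by (auto simp: split0_def split1_def)
  moreover have "A \<union> B \<subseteq> T" using A(1) B(1) split_subsets[of T] by blast
  moreover have "card (A \<union> B) = 4"
    using A B assms(1) card_Un_disjoint[of A B] finite_subset[OF _ assms(1)] split_subsets[of T]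
    by (fastforce simp: split0_def split1_def)
  ultimately show ?thesis using that[of "A \<union> B"] A(2) B(2) by simp
qed

theorem mainTheorem4:
  fixes S :: "nat set"
  assumes "finite S"
  shows "(\<not> caterpillar S \<longleftrightarrow>
            (\<exists>T\<subseteq>S. card T \<ge> 2 \<and> card (split0 T) \<ge> 2 \<and> card (split1 T) \<ge> 2))
       \<and> ((\<exists>T\<subseteq>S. card T \<ge> 2 \<and> card (split0 T) \<ge> 2 \<and> card (split1 T) \<ge> 2) \<longleftrightarrow>
            (\<exists>T\<subseteq>S. card T \<ge> 2 \<and> card (split0 T) = 2 \<and> card (split1 T) = 2))
       \<and> (caterpillar S \<longrightarrow> (\<forall>T\<subseteq>S. caterpillar T))"
proof -
  have wide: "wide_split T \<longleftrightarrow> card T \<ge> 2 \<and> card (split0 T) \<ge> 2 \<and> card (split1 T) \<ge> 2"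
    if "T \<subseteq> S" for T
    using assms that finite_subset wide_split_iff_card by metis
  have quartet: "(\<exists>T\<subseteq>S. wide_split T)
      \<longleftrightarrow> (\<exists>T\<subseteq>S. card T \<ge> 2 \<and> card (split0 T) = 2 \<and> card (split1 T) = 2)"
  proof
    assume "\<exists>T\<subseteq>S. wide_split T"
    then obtain T U where "T \<subseteq> S" "U \<subseteq> T" "card U = 4" "card (split0 U) = 2" "card (split1 U) = 2"
      using assms finite_subset wide_split_obtain_card_4 by metis
    then show "\<exists>T\<subseteq>S. card T \<ge> 2 \<and> card (split0 T) = 2 \<and> card (split1 T) = 2"
      by (intro exI[of _ U]) auto
  qed (auto simp: wide_split_def)
  show ?thesis
    using caterpillar_iff_no_wide_subset[OF assms] wide quartet caterpillar_subset by auto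
qed

end
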